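(* Let $\Omega\subset\mathbb R^d$ be a bounded Borel set, $f:\Omega\to[0,\infty)$ with $\int_\Omega f=1$, $p\ge1$, $x_1,\dots,x_k\in\Omega$, and $h_1,\dots,h_k:[0,1]\to[0,\infty)$ arbitrary functions. Then $$\inf_{(A_i)_{i=1}^k}\Big\{\sum_{i=1}^k\int_{A_i}\Big[|x-x_i|^p+h_i\Big(\int_{A_i}f\,dx\Big)\Big]f(x)\,dx\Big\}=\inf_{c\in S}\Big\{W_p^p\Big(f\mathcal L^d\llcorner\Omega,\sum_{i=1}^kc_i\delta_{x_i}\Big)+\sum_{i=1}^kh_i(c_i)c_i\Big\},$$ where the first infimum is over all partitions $(A_i)_{i=1,\dots,k}$ of $\Omega$.
   Context: A partition of $\Omega$ is a family of Borel sets pairwise disjoint up to $f$-negligible sets whose union has full measure for $f\,dx$. $S=\{c\in\mathbb R^k:c_i\ge0,\sum_ic_i=1\}$. $W_p^p(\mu,\nu)=\inf\{\int|x-y|^p\,d\gamma\}$ over probability measures $\gamma$ on $\Omega\times\Omega$ with marginals $\mu$ and $\nu$. *)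

theory Defs
  imports "HOL-Probability.Probability"
begin

definition fmeas :: "'a::euclidean_space set \<Rightarrow> ('a \<Rightarrow> real) \<Rightarrow> 'a measure" where
  "fmeas \<Omega> f = density lborel (\<lambda>x. indicator \<Omega> x * ennreal (f x))"

definition dirac_comb :: "nat \<Rightarrow> (nat \<Rightarrow> real) \<Rightarrow> (nat \<Rightarrow> 'a::euclidean_space) \<Rightarrow> 'a measure" where
  "dirac_comb k c xs = measure_of UNIV (sets lborel)
     (\<lambda>A. \<Sum>i<k. ennreal (c i) * indicator A (xs i))"

definition simplex_S :: "nat \<Rightarrow> (nat \<Rightarrow> real) set" where
  "simplex_S k = {c. (\<forall>i<k. 0 \<le> c i) \<and> (\<forall>i\<ge>k. c i = 0) \<and> (\<Sum>i<k. c i) = 1}"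

definition couplings :: "'a::euclidean_space measure \<Rightarrow> 'a measure \<Rightarrow> ('a \<times> 'a) measure set" where
  "couplings \<mu> \<nu> = {\<gamma>. sets \<gamma> = sets (lborel \<Otimes>\<^sub>M lborel) \<and> prob_space \<gamma> \<and>
       distr \<gamma> lborel fst = \<mu> \<and> distr \<gamma> lborel snd = \<nu>}"

definition Wpp :: "real \<Rightarrow> 'a::euclidean_space measure \<Rightarrow> 'a measure \<Rightarrow> ennreal" where
  "Wpp p \<mu> \<nu> = (INF \<gamma>\<in>couplings \<mu> \<nu>. \<integral>\<^sup>+ z. ennreal (norm (fst z - snd z) powr p) \<partial>\<gamma>)"

text \<open>Partitions of Omega (up to f-negligible sets) into k Borel pieces.\<close>
definition partitions :: "nat \<Rightarrow> 'a::euclidean_space set \<Rightarrow> ('a \<Rightarrow> real) \<Rightarrow> (nat \<Rightarrow> 'a set) set" where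
  "partitions k \<Omega> f = {A. (\<forall>i<k. A i \<in> sets borel \<and> A i \<subseteq> \<Omega>) \<and>
      (\<forall>i<k. \<forall>j<k. i \<noteq> j \<longrightarrow> emeasure (fmeas \<Omega> f) (A i \<inter> A j) = 0) \<and>
      emeasure (fmeas \<Omega> f) (\<Omega> - (\<Union>i<k. A i)) = 0}"

end

theory Submission
  imports Defs
begin

text \<open>
  A partition \<open>A\<close> induces the transport map sending \<open>A\<^sub>i\<close> to \<open>x\<^sub>i\<close>, a coupling of
  \<open>f dx\<close> with \<open>\<Sum> c\<^sub>i \<delta>\<^bsub>x\<^sub>i\<^esub>\<close> for \<open>c\<^sub>i = |A\<^sub>i|\<close> whose cost is the transport part of the
  partition objective; this gives one inequality. Conversely, given a coupling \<open>\<gamma>\<close>, cut \<open>\<Omega>\<close>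
  into finitely many Borel cells \<open>Q\<^sub>j\<close> on which \<open>|x - y|\<^sup>p\<close> varies by less than \<open>\<eta>\<close>. Since
  \<open>f dx\<close> has no atoms, every cell can be cut further into Borel pieces \<open>P\<^sub>j\<^sub>i\<close> of
  prescribed masses; choosing the masses \<open>\<gamma>(Q\<^sub>j \<times> {x\<^sub>i})\<close> and putting \<open>A\<^sub>i = \<Union>\<^sub>j P\<^sub>j\<^sub>i\<close> yields a partition with
  \<open>|A\<^sub>i| = c\<^sub>i\<close> whose transport cost exceeds that of \<open>\<gamma>\<close> by at most \<open>2\<eta>\<close>.
\<close>

section \<open>Finite discrete measures and couplings\<close>

lemma sets_dirac_comb[simp, measurable_cong]: "sets (dirac_comb k c xs) = sets borel"
  unfolding dirac_comb_def by (simp add: sets.sigma_sets_eq[of borel, simplified])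

lemma emeasure_dirac_comb:
  assumes "C \<in> sets borel"
  shows "emeasure (dirac_comb k c xs) C = (\<Sum>i<k. ennreal (c i) * indicator C (xs i))"
  unfolding dirac_comb_def
proof (rule emeasure_measure_of_sigma)
  show "sigma_algebra UNIV (sets lborel)"
    using sets.sigma_algebra_axioms[of borel] by simp
  show "positive (sets lborel) (\<lambda>A. \<Sum>i<k. ennreal (c i) * indicator A (xs i))"
    by (simp add: positive_def)
  show "countably_additive (sets lborel) (\<lambda>A. \<Sum>i<k. ennreal (c i) * indicator A (xs i))"
  proof (rule countably_additiveI)
    fix A :: "nat \<Rightarrow> 'a set" assume "disjoint_family A"
    then show "(\<Sum>n. \<Sum>i<k. ennreal (c i) * indicator (A n) (xs i)) =
      (\<Sum>i<k. ennreal (c i) * indicator (\<Union> (range A)) (xs i))"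
      by (subst suminf_sum) (auto intro: summableI simp: suminf_indicator)
  qed
qed (use assms in auto)

lemma dirac_comb_cong:
  assumes "\<And>i. i < k \<Longrightarrow> c i = c' i"
  shows "dirac_comb k c xs = dirac_comb k c' xs"
  unfolding dirac_comb_def using assms by (metis (no_types, lifting) lessThan_iff sum.cong)

lemma measure_dirac_comb_singleton:
  assumes "\<And>i. i < k \<Longrightarrow> 0 \<le> c i"
  shows "measure (dirac_comb k c xs) {y} = (\<Sum>i | i < k \<and> xs i = y. c i)"
proof -
  have "emeasure (dirac_comb k c xs) {y} = (\<Sum>i<k. ennreal (c i) * indicator {y} (xs i))"
    by (rule emeasure_dirac_comb) simp
  also have "\<dots> = (\<Sum>i<k. ennreal (c i * indicator {y} (xs i)))"
    by (intro sum.cong refl) (simp add: indicator_def)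
  also have "\<dots> = ennreal (\<Sum>i<k. c i * indicator {y} (xs i))"
    using assms by (intro sum_ennreal) auto
  also have "(\<Sum>i<k. c i * indicator {y} (xs i)) = (\<Sum>i | i < k \<and> xs i = y. c i)"
    by (simp add: sum.If_cases indicator_def Int_def conj_commute)
  moreover have "0 \<le> (\<Sum>i | i < k \<and> xs i = y. c i)"
    using assms by (intro sum_nonneg) auto
  ultimately show ?thesis by (simp add: measure_def)
qed

lemma sum_indicator_mult_disjoint:
  fixes g :: "nat \<Rightarrow> 'b::semiring_1"
  assumes "disjoint_family_on B {..<k}" "j < k" "x \<in> B j"
  shows "(\<Sum>i<k. g i * indicator (B i) x) = g j"
proof -
  have "(\<Sum>i<k. g i * indicator (B i) x) = (\<Sum>i<k. if i = j then g i else 0)"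
    using assms by (intro sum.cong) (fastforce simp: disjoint_family_on_def split: split_indicator)+
  then show ?thesis using assms(2) by simp
qed

lemma sum_indicator_scaleR_disjoint:
  fixes g :: "nat \<Rightarrow> 'b::real_vector"
  assumes "disjoint_family_on B {..<k}" "j < k" "x \<in> B j"
  shows "(\<Sum>i<k. indicator (B i) x *\<^sub>R g i) = g j"
proof -
  have "(\<Sum>i<k. indicator (B i) x *\<^sub>R g i) = (\<Sum>i<k. if i = j then g i else 0)"
    using assms by (intro sum.cong) (fastforce simp: disjoint_family_on_def split: split_indicator)+
  then show ?thesis using assms(2) by simp
qed

lemma distr_sum_indicator_scaleR:
  fixes M :: "'a::euclidean_space measure" and xs :: "nat \<Rightarrow> 'b::euclidean_space"
  assumes "finite_measure M" and sets_M[measurable_cong]: "sets M = sets borel"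
    and B[measurable]: "\<And>i. i < k \<Longrightarrow> B i \<in> sets borel"
    and "disjoint_family_on B {..<k}" "(\<Union>i<k. B i) = UNIV"
  shows "distr M lborel (\<lambda>x. \<Sum>i<k. indicator (B i) x *\<^sub>R xs i) = dirac_comb k (\<lambda>i. measure M (B i)) xs"
proof (rule measure_eqI)
  interpret finite_measure M by fact
  let ?T = "\<lambda>x. \<Sum>i<k. indicator (B i) x *\<^sub>R xs i"
  have T_B: "?T x = xs j" if "j < k" "x \<in> B j" for j x
    by (rule sum_indicator_scaleR_disjoint[OF assms(4) that])
  have T: "?T \<in> measurable M lborel" by measurable
  fix C assume "C \<in> sets (distr M lborel ?T)"
  then have C: "C \<in> sets lborel" by simp
  have "emeasure (distr M lborel ?T) C = emeasure M (?T -` C \<inter> space M)"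
    by (rule emeasure_distr[OF T C])
  also have "?T -` C \<inter> space M = (\<Union>i<k. ?T -` C \<inter> B i)"
    using assms(5) by (auto simp: sets_eq_imp_space_eq[OF sets_M])
  also have "emeasure M \<dots> = (\<Sum>i<k. emeasure M (?T -` C \<inter> B i))"
  proof (intro sum_emeasure[symmetric])
    have "?T -` C \<in> sets M"
      using measurable_sets[OF T C] by (simp add: sets_eq_imp_space_eq[OF sets_M])
    then show "(\<lambda>i. ?T -` C \<inter> B i) ` {..<k} \<subseteq> sets M" by auto
    show "disjoint_family_on (\<lambda>i. ?T -` C \<inter> B i) {..<k}"
      using assms(4) by (auto simp: disjoint_family_on_def)
  qed simp
  also have "\<dots> = (\<Sum>i<k. ennreal (measure M (B i)) * indicator C (xs i))"
  proof (intro sum.cong refl)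
    fix i assume "i \<in> {..<k}"
    then have "?T -` C \<inter> B i = (if xs i \<in> C then B i else {})" using T_B by auto
    then show "emeasure M (?T -` C \<inter> B i) = ennreal (measure M (B i)) * indicator C (xs i)"
      by (simp add: emeasure_eq_measure)
  qed
  also have "\<dots> = emeasure (dirac_comb k (\<lambda>i. measure M (B i)) xs) C"
    by (rule emeasure_dirac_comb[symmetric]) (use C in simp)
  finally show "emeasure (distr M lborel ?T) C = emeasure (dirac_comb k (\<lambda>i. measure M (B i)) xs) C" .
qed simp

lemma couplingD:
  assumes "\<gamma> \<in> couplings \<mu> \<nu>"
  shows "sets \<gamma> = sets (lborel \<Otimes>\<^sub>M lborel)" "space \<gamma> = UNIV" "prob_space \<gamma>"
proof -
  show s: "sets \<gamma> = sets (lborel \<Otimes>\<^sub>M lborel)" and "prob_space \<gamma>"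
    using assms by (auto simp: couplings_def)
  show "space \<gamma> = UNIV"
    using sets_eq_imp_space_eq[OF s] by (simp add: space_pair_measure)
qed

lemma emeasure_coupling_fst:
  assumes "\<gamma> \<in> couplings \<mu> \<nu>" "B \<in> sets borel"
  shows "emeasure \<gamma> (B \<times> UNIV) = emeasure \<mu> B"
proof -
  have s: "sets \<gamma> = sets (lborel \<Otimes>\<^sub>M lborel)" and sp: "space \<gamma> = UNIV"
    using couplingD[OF assms(1)] by auto
  have mf: "fst \<in> measurable \<gamma> lborel"
    unfolding measurable_cong_sets[OF s refl] by (rule measurable_fst)
  have "emeasure \<mu> B = emeasure (distr \<gamma> lborel fst) B"
    using assms(1) by (simp add: couplings_def)
  also have "\<dots> = emeasure \<gamma> (fst -` B \<inter> space \<gamma>)"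
    using assms(2) mf by (subst emeasure_distr) auto
  also have "fst -` B \<inter> space \<gamma> = B \<times> UNIV" using sp by auto
  finally show ?thesis by simp
qed

lemma emeasure_coupling_snd:
  assumes "\<gamma> \<in> couplings \<mu> \<nu>" "C \<in> sets borel"
  shows "emeasure \<gamma> (UNIV \<times> C) = emeasure \<nu> C"
proof -
  have s: "sets \<gamma> = sets (lborel \<Otimes>\<^sub>M lborel)" and sp: "space \<gamma> = UNIV"
    using couplingD[OF assms(1)] by auto
  have ms: "snd \<in> measurable \<gamma> lborel"
    unfolding measurable_cong_sets[OF s refl] by (rule measurable_snd)
  have "emeasure \<nu> C = emeasure (distr \<gamma> lborel snd) C"
    using assms(1) by (simp add: couplings_def)
  also have "\<dots> = emeasure \<gamma> (snd -` C \<inter> space \<gamma>)"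
    using assms(2) ms by (subst emeasure_distr) auto
  also have "snd -` C \<inter> space \<gamma> = UNIV \<times> C" using sp by auto
  finally show ?thesis by simp
qed

lemma emeasure_coupling_dirac_comb_outside:
  assumes "\<gamma> \<in> couplings \<mu> (dirac_comb k c xs)"
  shows "emeasure \<gamma> (UNIV \<times> - xs ` {..<k}) = 0"
proof -
  have "- xs ` {..<k} \<in> sets borel" by (intro borel_comp borel_closed finite_imp_closed) auto
  then show ?thesis
    using assms by (simp add: emeasure_coupling_snd emeasure_dirac_comb)
qed

lemma Wpp_le_transport_map:
  fixes \<mu> :: "'a::euclidean_space measure"
  assumes "prob_space \<mu>" and sets_\<mu>[measurable_cong]: "sets \<mu> = sets borel"
    and [measurable]: "T \<in> borel_measurable borel"
  shows "Wpp p \<mu> (distr \<mu> lborel T) \<le> (\<integral>\<^sup>+x. ennreal (norm (x - T x) powr p) \<partial>\<mu>)"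
proof -
  define \<gamma> where "\<gamma> = distr \<mu> (lborel \<Otimes>\<^sub>M lborel) (\<lambda>x. (x, T x))"
  have graph[measurable]: "(\<lambda>x. (x, T x)) \<in> measurable \<mu> (lborel \<Otimes>\<^sub>M lborel)"
    by measurable
  have "\<gamma> \<in> couplings \<mu> (distr \<mu> lborel T)"
    unfolding couplings_def
  proof (intro CollectI conjI)
    show "sets \<gamma> = sets (lborel \<Otimes>\<^sub>M lborel)" by (simp add: \<gamma>_def)
    show "prob_space \<gamma>"
      unfolding \<gamma>_def by (intro prob_space.prob_space_distr assms(1) graph)
    have "distr \<gamma> lborel fst = distr \<mu> lborel (\<lambda>x. x)"
      unfolding \<gamma>_def by (subst distr_distr) (auto simp: comp_def)
    then show "distr \<gamma> lborel fst = \<mu>" by (simp add: distr_id2 sets_\<mu>)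
    show "distr \<gamma> lborel snd = distr \<mu> lborel T"
      unfolding \<gamma>_def by (subst distr_distr) (auto simp: comp_def)
  qed
  then have "Wpp p \<mu> (distr \<mu> lborel T) \<le> (\<integral>\<^sup>+z. ennreal (norm (fst z - snd z) powr p) \<partial>\<gamma>)"
    unfolding Wpp_def by (rule INF_lower)
  also have "\<dots> = (\<integral>\<^sup>+x. ennreal (norm (x - T x) powr p) \<partial>\<mu>)"
    unfolding \<gamma>_def by (subst nn_integral_distr) auto
  finally show ?thesis .
qed

lemma ennreal_le_INF_add_by_epsilon:
  fixes x y :: ennreal and F :: "'b \<Rightarrow> ennreal"
  assumes "\<And>\<gamma> e. \<gamma> \<in> \<Gamma> \<Longrightarrow> 0 < e \<Longrightarrow> x \<le> F \<gamma> + y + ennreal e"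
  shows "x \<le> (INF \<gamma>\<in>\<Gamma>. F \<gamma>) + y"
proof (rule ennreal_le_epsilon)
  fix e :: real assume fin: "(INF \<gamma>\<in>\<Gamma>. F \<gamma>) + y < top" and e: "0 < e"
  then obtain r where r: "(INF \<gamma>\<in>\<Gamma>. F \<gamma>) = ennreal r" "0 \<le> r"
    by (cases "INF \<gamma>\<in>\<Gamma>. F \<gamma>" rule: ennreal_cases) auto
  then have "(INF \<gamma>\<in>\<Gamma>. F \<gamma>) < ennreal (r + e / 2)"
    using e by (simp add: ennreal_less_iff)
  then obtain \<gamma> where "\<gamma> \<in> \<Gamma>" "F \<gamma> < ennreal (r + e / 2)"
    by (auto simp: INF_less_iff)
  have "x \<le> F \<gamma> + y + ennreal (e / 2)"
    using assms \<open>\<gamma> \<in> \<Gamma>\<close> e by simp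
  also have "\<dots> \<le> ennreal r + ennreal (e / 2) + y + ennreal (e / 2)"
    using \<open>F \<gamma> < ennreal (r + e / 2)\<close> r e by (intro add_right_mono) (simp add: ennreal_plus)
  also have "\<dots> = ennreal r + y + (ennreal (e / 2) + ennreal (e / 2))"
    by (simp add: ac_simps)
  also have "ennreal (e / 2) + ennreal (e / 2) = ennreal e"
    using e by (simp flip: ennreal_plus)
  finally show "x \<le> (INF \<gamma>\<in>\<Gamma>. F \<gamma>) + y + ennreal e"
    using r by simp
qed

lemma nn_integral_indicator_UN_disjoint:
  assumes "finite I" "disjoint_family_on P I" "\<And>i. i \<in> I \<Longrightarrow> P i \<in> sets M"
    and "g \<in> borel_measurable M"
  shows "(\<integral>\<^sup>+x. g x * indicator (\<Union>i\<in>I. P i) x \<partial>M) = (\<Sum>i\<in>I. \<integral>\<^sup>+x. g x * indicator (P i) x \<partial>M)"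
proof -
  have "(\<integral>\<^sup>+x. g x * indicator (\<Union>i\<in>I. P i) x \<partial>M) = (\<integral>\<^sup>+x. (\<Sum>i\<in>I. g x * indicator (P i) x) \<partial>M)"
    using assms(1,2) by (intro nn_integral_cong) (simp add: indicator_UN_disjoint sum_distrib_left)
  also have "\<dots> = (\<Sum>i\<in>I. \<integral>\<^sup>+x. g x * indicator (P i) x \<partial>M)"
    using assms(3,4) by (intro nn_integral_sum) auto
  finally show ?thesis .
qed

lemma nn_integral_indicator_UN_le_sum:
  assumes "finite_measure M" "finite I" "disjoint_family_on P I" "\<And>i. i \<in> I \<Longrightarrow> P i \<in> sets M"
    and "g \<in> borel_measurable M" "\<And>i. i \<in> I \<Longrightarrow> 0 \<le> b i"
    and "\<And>i x. i \<in> I \<Longrightarrow> x \<in> P i \<Longrightarrow> g x \<le> ennreal (b i)"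
  shows "(\<integral>\<^sup>+x. g x * indicator (\<Union>i\<in>I. P i) x \<partial>M) \<le> ennreal (\<Sum>i\<in>I. b i * measure M (P i))"
proof -
  have "(\<integral>\<^sup>+x. g x * indicator (P i) x \<partial>M) \<le> ennreal (b i * measure M (P i))" if "i \<in> I" for i
  proof -
    have "(\<integral>\<^sup>+x. g x * indicator (P i) x \<partial>M) \<le> (\<integral>\<^sup>+x. ennreal (b i) * indicator (P i) x \<partial>M)"
      using assms(7)[OF that] by (intro nn_integral_mono) (simp split: split_indicator)
    also have "\<dots> = ennreal (b i * measure M (P i))"
      using assms(4,6)[OF that] finite_measure.emeasure_eq_measure[OF assms(1)]
      by (simp add: nn_integral_cmult_indicator ennreal_mult)
    finally show ?thesis .
  qed
  then have "(\<integral>\<^sup>+x. g x * indicator (\<Union>i\<in>I. P i) x \<partial>M) \<le> (\<Sum>i\<in>I. ennreal (b i * measure M (P i)))"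
    using assms(2-5) by (simp add: nn_integral_indicator_UN_disjoint sum_mono)
  also have "\<dots> = ennreal (\<Sum>i\<in>I. b i * measure M (P i))"
    using assms(6) by (intro sum_ennreal) auto
  finally show ?thesis .
qed

lemma sum_le_nn_integral_disjoint:
  assumes "finite_measure M" "finite I" "disjoint_family_on E I" "\<And>i. i \<in> I \<Longrightarrow> E i \<in> sets M"
    and "g \<in> borel_measurable M" "\<And>i. i \<in> I \<Longrightarrow> 0 \<le> b i"
    and "\<And>i x. i \<in> I \<Longrightarrow> x \<in> E i \<Longrightarrow> ennreal (b i) \<le> g x"
  shows "ennreal (\<Sum>i\<in>I. b i * measure M (E i)) \<le> (\<integral>\<^sup>+x. g x \<partial>M)"
proof -
  have "ennreal (b i * measure M (E i)) \<le> (\<integral>\<^sup>+x. g x * indicator (E i) x \<partial>M)" if "i \<in> I" for i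
  proof -
    have "ennreal (b i * measure M (E i)) = (\<integral>\<^sup>+x. ennreal (b i) * indicator (E i) x \<partial>M)"
      using assms(4,6)[OF that] finite_measure.emeasure_eq_measure[OF assms(1)]
      by (simp add: nn_integral_cmult_indicator ennreal_mult)
    also have "\<dots> \<le> (\<integral>\<^sup>+x. g x * indicator (E i) x \<partial>M)"
      using assms(7)[OF that] by (intro nn_integral_mono) (simp split: split_indicator)
    finally show ?thesis .
  qed
  then have "(\<Sum>i\<in>I. ennreal (b i * measure M (E i))) \<le> (\<integral>\<^sup>+x. g x * indicator (\<Union>i\<in>I. E i) x \<partial>M)"
    using assms(2-5) by (simp add: nn_integral_indicator_UN_disjoint sum_mono)
  also have "\<dots> \<le> (\<integral>\<^sup>+x. g x \<partial>M)"
    by (intro nn_integral_mono) (simp split: split_indicator)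
  finally show ?thesis
    using assms(6) by (simp add: sum_ennreal)
qed

lemma sum_measure_disjoint_eq_AE:
  assumes "finite_measure M" "finite I" "disjoint_family_on E I" "\<And>i. i \<in> I \<Longrightarrow> E i \<in> sets M"
    and "F \<in> sets M" "(\<Union>i\<in>I. E i) \<subseteq> F" "F - (\<Union>i\<in>I. E i) \<subseteq> N" "N \<in> null_sets M"
  shows "(\<Sum>i\<in>I. measure M (E i)) = measure M F"
proof -
  interpret finite_measure M by fact
  have "(\<Sum>i\<in>I. measure M (E i)) = measure M (\<Union>i\<in>I. E i)"
    using assms(2-4) by (intro finite_measure_finite_Union[symmetric]) auto
  also have "\<dots> = measure M F"
  proof (rule measure_eq_AE)
    show "AE x in M. (x \<in> (\<Union>i\<in>I. E i)) = (x \<in> F)"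
      using AE_not_in[OF assms(8)] by eventually_elim (use assms(6,7) in blast)
  qed (use assms(2,4,5) in auto)
  finally show ?thesis .
qed

lemma sum_measure_coupling_dirac_comb_row:
  assumes \<gamma>: "\<gamma> \<in> couplings \<mu> (dirac_comb k c xs)" and B: "B \<in> sets borel"
  shows "(\<Sum>y\<in>xs ` {..<k}. measure \<gamma> (B \<times> {y})) = measure \<mu> B"
proof -
  note sets_\<gamma> = couplingD(1)[OF \<gamma>]
  have "- xs ` {..<k} \<in> sets borel" by (intro borel_comp borel_closed finite_imp_closed) auto
  then have "UNIV \<times> - xs ` {..<k} \<in> null_sets \<gamma>"
    using emeasure_coupling_dirac_comb_outside[OF \<gamma>] sets_\<gamma> by (intro null_setsI) simp_all
  then have "(\<Sum>y\<in>xs ` {..<k}. measure \<gamma> (B \<times> {y})) = measure \<gamma> (B \<times> UNIV)"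
  proof (rule sum_measure_disjoint_eq_AE[rotated 7])
    show "finite_measure \<gamma>" using couplingD(3)[OF \<gamma>] by (simp add: prob_space_def)
    show "disjoint_family_on (\<lambda>y. B \<times> {y}) (xs ` {..<k})"
      by (auto simp: disjoint_family_on_def)
    show "B \<times> {y} \<in> sets \<gamma>" for y using B sets_\<gamma> by simp
    show "B \<times> UNIV \<in> sets \<gamma>" using B sets_\<gamma> by simp
  qed blast+
  also have "\<dots> = measure \<mu> B"
    using emeasure_coupling_fst[OF assms] by (simp add: measure_def)
  finally show ?thesis .
qed

lemma sum_measure_coupling_dirac_comb_col:
  fixes m :: nat
  assumes \<gamma>: "\<gamma> \<in> couplings \<mu> (dirac_comb k c xs)" and c_nonneg: "\<And>i. i < k \<Longrightarrow> 0 \<le> c i"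
    and Q: "\<And>j. j < m \<Longrightarrow> Q j \<in> sets borel" "disjoint_family_on Q {..<m}"
    and S: "S \<in> sets borel" "(\<Union>j<m. Q j) = S" "emeasure \<mu> (- S) = 0"
  shows "(\<Sum>j<m. measure \<gamma> (Q j \<times> {y})) = (\<Sum>i | i < k \<and> xs i = y. c i)"
proof -
  note sets_\<gamma> = couplingD(1)[OF \<gamma>]
  have "- S \<in> sets borel" using S(1) by (rule borel_comp)
  then have "(- S) \<times> UNIV \<in> null_sets \<gamma>"
    using emeasure_coupling_fst[OF \<gamma>, of "- S"] S(3) sets_\<gamma> by (intro null_setsI) simp_all
  then have "(\<Sum>j<m. measure \<gamma> (Q j \<times> {y})) = measure \<gamma> (UNIV \<times> {y})"
  proof (rule sum_measure_disjoint_eq_AE[rotated 7])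
    show "finite_measure \<gamma>" using couplingD(3)[OF \<gamma>] by (simp add: prob_space_def)
    show "disjoint_family_on (\<lambda>j. Q j \<times> {y}) {..<m}"
      using Q(2) by (auto simp: disjoint_family_on_def)
    show "Q j \<times> {y} \<in> sets \<gamma>" if "j \<in> {..<m}" for j using Q(1) that sets_\<gamma> by simp
    show "UNIV \<times> {y} \<in> sets \<gamma>" using sets_\<gamma> by simp
    show "UNIV \<times> {y} - (\<Union>j\<in>{..<m}. Q j \<times> {y}) \<subseteq> (- S) \<times> UNIV" using S(2) by blast
  qed auto
  also have "\<dots> = measure (dirac_comb k c xs) {y}"
    using emeasure_coupling_snd[OF \<gamma>, of "{y}"] by (simp add: measure_def)
  also have "\<dots> = (\<Sum>i | i < k \<and> xs i = y. c i)"
    by (rule measure_dirac_comb_singleton[OF c_nonneg])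
  finally show ?thesis .
qed

lemma sum_cells_le_coupling_cost:
  fixes \<gamma> :: "('a::euclidean_space \<times> 'a) measure" and m :: nat
  assumes \<gamma>: "\<gamma> \<in> couplings \<mu> \<nu>"
    and Q_borel: "\<And>j. j < m \<Longrightarrow> Q j \<in> sets borel" and Q_disj: "disjoint_family_on Q {..<m}"
    and "finite D" and b_nonneg: "\<And>j y. 0 \<le> b j y" and "0 \<le> \<eta>"
    and b_le: "\<And>j x y. j < m \<Longrightarrow> x \<in> Q j \<Longrightarrow> y \<in> D \<Longrightarrow> b j y \<le> norm (x - y) powr p + \<eta>"
  shows "ennreal (\<Sum>j<m. \<Sum>y\<in>D. b j y * measure \<gamma> (Q j \<times> {y}))
    \<le> (\<integral>\<^sup>+z. ennreal (norm (fst z - snd z) powr p) \<partial>\<gamma>) + ennreal \<eta>"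
proof -
  note sets_\<gamma> = couplingD(1)[OF \<gamma>]
  have cost_measurable: "(\<lambda>z. ennreal (norm (fst z - snd z) powr p)) \<in> borel_measurable \<gamma>"
    unfolding measurable_cong_sets[OF sets_\<gamma> refl] by measurable
  have "(\<Sum>j<m. \<Sum>y\<in>D. b j y * measure \<gamma> (Q j \<times> {y})) =
      (\<Sum>z\<in>{..<m} \<times> D. b (fst z) (snd z) * measure \<gamma> (Q (fst z) \<times> {snd z}))"
    by (simp add: sum.cartesian_product case_prod_beta)
  also have "ennreal \<dots> \<le> (\<integral>\<^sup>+z. ennreal (norm (fst z - snd z) powr p + \<eta>) \<partial>\<gamma>)"
  proof (rule sum_le_nn_integral_disjoint)
    show "finite_measure \<gamma>" using couplingD(3)[OF \<gamma>] by (simp add: prob_space_def)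
    show "disjoint_family_on (\<lambda>z. Q (fst z) \<times> {snd z}) ({..<m} \<times> D)"
      unfolding disjoint_family_on_def
    proof (intro ballI impI)
      fix z z' assume z: "z \<in> {..<m} \<times> D" and z': "z' \<in> {..<m} \<times> D" and "z \<noteq> z'"
      show "Q (fst z) \<times> {snd z} \<inter> Q (fst z') \<times> {snd z'} = {}"
      proof (cases "fst z = fst z'")
        case True
        then have "snd z \<noteq> snd z'" using \<open>z \<noteq> z'\<close> by (simp add: prod_eq_iff)
        then show ?thesis by blast
      next
        case False
        moreover have "fst z \<in> {..<m}" "fst z' \<in> {..<m}"
          using z z' by (simp_all add: mem_Times_iff)
        ultimately have "Q (fst z) \<inter> Q (fst z') = {}"
          using Q_disj unfolding disjoint_family_on_def by blast
        then show ?thesis by blast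
      qed
    qed
    show "Q (fst z) \<times> {snd z} \<in> sets \<gamma>" if "z \<in> {..<m} \<times> D" for z
    proof -
      have "fst z < m" using that by (simp add: mem_Times_iff)
      then have "Q (fst z) \<times> {snd z} \<in> sets (lborel \<Otimes>\<^sub>M lborel)"
        using Q_borel by (intro pair_measureI) simp_all
      then show ?thesis using sets_\<gamma> by simp
    qed
    show "(\<lambda>z. ennreal (norm (fst z - snd z) powr p + \<eta>)) \<in> borel_measurable \<gamma>"
      unfolding measurable_cong_sets[OF sets_\<gamma> refl] by measurable
    show "ennreal (b (fst z) (snd z)) \<le> ennreal (norm (fst z' - snd z') powr p + \<eta>)"
      if "z \<in> {..<m} \<times> D" "z' \<in> Q (fst z) \<times> {snd z}" for z z'
    proof -
      have "fst z < m" "fst z' \<in> Q (fst z)" "snd z' = snd z" "snd z \<in> D"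
        using that by (auto simp: mem_Times_iff)
      then show ?thesis using b_le[of "fst z" "fst z'" "snd z"] by (intro ennreal_leI) simp
    qed
  qed (use b_nonneg \<open>finite D\<close> in auto)
  also have "(\<integral>\<^sup>+z. ennreal (norm (fst z - snd z) powr p + \<eta>) \<partial>\<gamma>) =
      (\<integral>\<^sup>+z. ennreal (norm (fst z - snd z) powr p) + ennreal \<eta> \<partial>\<gamma>)"
    using \<open>0 \<le> \<eta>\<close> by (intro nn_integral_cong) (simp add: ennreal_plus)
  also have "\<dots> = (\<integral>\<^sup>+z. ennreal (norm (fst z - snd z) powr p) \<partial>\<gamma>) + (\<integral>\<^sup>+z. ennreal \<eta> \<partial>\<gamma>)"
    using cost_measurable by (intro nn_integral_add) auto
  also have "(\<integral>\<^sup>+z. ennreal \<eta> \<partial>\<gamma>) = ennreal \<eta>"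
    using prob_space.emeasure_space_1[OF couplingD(3)[OF \<gamma>]] by simp
  finally show ?thesis .
qed

lemma exists_weights_splitting_fibres:
  fixes G :: "nat \<Rightarrow> 'a \<Rightarrow> real" and c :: "nat \<Rightarrow> real" and xs :: "nat \<Rightarrow> 'a"
  assumes G_nonneg: "\<And>j y. 0 \<le> G j y" and c_nonneg: "\<And>i. i < k \<Longrightarrow> 0 \<le> c i"
    and G_col: "\<And>y. (\<Sum>j<m. G j y) = (\<Sum>i | i < k \<and> xs i = y. c i)"
  obtains w where "\<And>j i. i < k \<Longrightarrow> 0 \<le> w j i" "\<And>i. i < k \<Longrightarrow> (\<Sum>j<m. w j i) = c i"
    "\<And>j a. j < m \<Longrightarrow> (\<Sum>i<k. w j i * a (xs i)) = (\<Sum>y\<in>xs ` {..<k}. G j y * a y)"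
proof -
  define mass where "mass y = (\<Sum>i | i < k \<and> xs i = y. c i)" for y
  \<comment> \<open>the mass \<open>G j y\<close> is shared among the indices \<open>i\<close> with \<open>xs i = y\<close> in proportion to \<open>c i\<close>\<close>
  define w where "w j i = (if mass (xs i) = 0 then 0 else G j (xs i) / mass (xs i)) * c i" for j i
  have mass_nonneg: "0 \<le> mass y" for y
    unfolding mass_def using c_nonneg by (intro sum_nonneg) auto
  have c_le_mass: "c i \<le> mass (xs i)" if "i < k" for i
    unfolding mass_def using c_nonneg that by (intro member_le_sum) auto
  have G_le_mass: "G j y \<le> mass y" if "j < m" for j y
    unfolding mass_def G_col[symmetric] using G_nonneg that by (intro member_le_sum) auto
  show thesis
  proof (rule that)
    show "0 \<le> w j i" if "i < k" for j i
      unfolding w_def using G_nonneg mass_nonneg c_nonneg[OF that] by auto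
    show "(\<Sum>j<m. w j i) = c i" if "i < k" for i
    proof (cases "mass (xs i) = 0")
      case True
      then show ?thesis using c_le_mass[OF that] c_nonneg[OF that] by (simp add: w_def)
    next
      case False
      then show ?thesis
        by (simp add: w_def G_col mass_def[symmetric] sum_distrib_right[symmetric] sum_divide_distrib[symmetric])
    qed
    show "(\<Sum>i<k. w j i * a (xs i)) = (\<Sum>y\<in>xs ` {..<k}. G j y * a y)" if "j < m" for j a
    proof -
      have "(\<Sum>i<k. w j i * a (xs i)) = (\<Sum>y\<in>xs ` {..<k}. \<Sum>i | i < k \<and> xs i = y. w j i * a (xs i))"
        by (subst sum.image_gen[where g = xs]) (auto intro!: sum.cong)
      also have "\<dots> = (\<Sum>y\<in>xs ` {..<k}. (if mass y = 0 then 0 else G j y / mass y) * a y * mass y)"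
      proof (intro sum.cong refl)
        fix y
        have "(\<Sum>i | i < k \<and> xs i = y. w j i * a (xs i)) =
            (\<Sum>i | i < k \<and> xs i = y. (if mass y = 0 then 0 else G j y / mass y) * a y * c i)"
          by (intro sum.cong refl) (auto simp: w_def)
        then show "(\<Sum>i | i < k \<and> xs i = y. w j i * a (xs i)) =
            (if mass y = 0 then 0 else G j y / mass y) * a y * mass y"
          by (simp add: mass_def sum_distrib_left)
      qed
      also have "\<dots> = (\<Sum>y\<in>xs ` {..<k}. G j y * a y)"
      proof (intro sum.cong refl)
        fix y
        have "G j y = 0" if "mass y = 0"
          using G_le_mass[OF \<open>j < m\<close>, of y] G_nonneg[of j y] that by linarith
        then show "(if mass y = 0 then 0 else G j y / mass y) * a y * mass y = G j y * a y"
          by auto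
      qed
      finally show ?thesis .
    qed
  qed
qed

lemma exists_cell_weights_of_coupling:
  fixes m k :: nat
  assumes \<gamma>: "\<gamma> \<in> couplings \<mu> (dirac_comb k c xs)" and c_nonneg: "\<And>i. i < k \<Longrightarrow> 0 \<le> c i"
    and Q_borel: "\<And>j. j < m \<Longrightarrow> Q j \<in> sets borel" and Q_disj: "disjoint_family_on Q {..<m}"
    and S: "S \<in> sets borel" "(\<Union>j<m. Q j) = S" "emeasure \<mu> (- S) = 0"
  obtains w where "\<And>j i. i < k \<Longrightarrow> 0 \<le> w j i" "\<And>i. i < k \<Longrightarrow> (\<Sum>j<m. w j i) = c i"
    "\<And>j. j < m \<Longrightarrow> (\<Sum>i<k. w j i) = measure \<mu> (Q j)"
    "\<And>j a. j < m \<Longrightarrow> (\<Sum>i<k. w j i * a (xs i)) = (\<Sum>y\<in>xs ` {..<k}. measure \<gamma> (Q j \<times> {y}) * a y)"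
proof -
  define G where "G j y = measure \<gamma> (Q j \<times> {y})" for j y
  have G_nonneg: "\<And>j y. 0 \<le> G j y" by (simp add: G_def)
  have G_col: "(\<Sum>j<m. G j y) = (\<Sum>i | i < k \<and> xs i = y. c i)" for y
    unfolding G_def by (rule sum_measure_coupling_dirac_comb_col[OF \<gamma> c_nonneg Q_borel Q_disj S])
  show thesis
  proof (rule exists_weights_splitting_fibres[OF G_nonneg c_nonneg G_col])
    fix w assume w_nonneg: "\<And>j i. i < k \<Longrightarrow> 0 \<le> w j i"
      and w_col: "\<And>i. i < k \<Longrightarrow> (\<Sum>j<m. w j i) = c i"
      and w_fibre: "\<And>j a. j < m \<Longrightarrow> (\<Sum>i<k. w j i * a (xs i)) = (\<Sum>y\<in>xs ` {..<k}. G j y * a y)"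
    have w_row: "(\<Sum>i<k. w j i) = measure \<mu> (Q j)" if "j < m" for j
      using w_fibre[OF that, of "\<lambda>_. 1"] sum_measure_coupling_dirac_comb_row[OF \<gamma> Q_borel[OF that]]
      unfolding G_def by simp
    from w_nonneg w_col w_row w_fibre[unfolded G_def] show thesis by (rule that)
  qed
qed

section \<open>Cutting sets into pieces of small oscillation or prescribed mass\<close>

lemma uniformly_continuous_norm_diff_powr:
  fixes S :: "'a::euclidean_space set"
  assumes "bounded S" "0 < p" "0 < \<eta>"
  obtains \<delta> where "0 < \<delta>"
    "\<And>x x' y. x \<in> S \<Longrightarrow> x' \<in> S \<Longrightarrow> y \<in> S \<Longrightarrow> dist x x' < \<delta> \<Longrightarrow>
       \<bar>norm (x - y) powr p - norm (x' - y) powr p\<bar> < \<eta>"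
proof -
  obtain r where "S \<subseteq> ball 0 r" using bounded_subset_ballD[OF assms(1), of 0] by blast
  then have diff: "x - y \<in> cball 0 (2 * r)" if "x \<in> S" "y \<in> S" for x y
  proof -
    have "norm x < r" "norm y < r" using that \<open>S \<subseteq> ball 0 r\<close> by auto
    then show ?thesis using norm_triangle_ineq4[of x y] by simp
  qed
  have "uniformly_continuous_on (cball (0::'a) (2 * r)) (\<lambda>z. norm z powr p)"
    using assms(2) by (intro compact_uniformly_continuous continuous_on_powr')
      (auto intro: continuous_intros)
  then obtain \<delta> where "0 < \<delta>" and \<delta>: "\<forall>z\<in>cball (0::'a) (2 * r). \<forall>z'\<in>cball 0 (2 * r).
      dist z' z < \<delta> \<longrightarrow> dist (norm z' powr p) (norm z powr p) < \<eta>"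
    using assms(3) unfolding uniformly_continuous_on_def by blast
  show thesis
  proof (rule that[OF \<open>0 < \<delta>\<close>])
    fix x x' y assume "x \<in> S" "x' \<in> S" "y \<in> S" "dist x x' < \<delta>"
    then show "\<bar>norm (x - y) powr p - norm (x' - y) powr p\<bar> < \<eta>"
    proof -
      have "dist (x' - y) (x - y) < \<delta>" using \<open>dist x x' < \<delta>\<close> by (simp add: dist_norm norm_minus_commute)
      then have "dist (norm (x' - y) powr p) (norm (x - y) powr p) < \<eta>"
        using \<delta> diff[OF \<open>x \<in> S\<close> \<open>y \<in> S\<close>] diff[OF \<open>x' \<in> S\<close> \<open>y \<in> S\<close>] by blast
      then show ?thesis by (simp add: dist_real_def abs_minus_commute)
    qed
  qed
qed

lemma Borel_partition_small_diameter:
  fixes S :: "'a::euclidean_space set"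
  assumes "S \<in> sets borel" "bounded S" "0 < \<delta>"
  obtains m :: nat and Q where "\<And>j. j < m \<Longrightarrow> Q j \<in> sets borel" "\<And>j. j < m \<Longrightarrow> Q j \<subseteq> S"
    "\<And>j x x'. j < m \<Longrightarrow> x \<in> Q j \<Longrightarrow> x' \<in> Q j \<Longrightarrow> dist x x' < \<delta>"
    "disjoint_family_on Q {..<m}" "(\<Union>j<m. Q j) = S"
proof -
  obtain R where R: "S \<subseteq> ball 0 R" using bounded_subset_ballD[OF assms(2), of 0] by blast
  have "0 < \<delta> / 2" using assms(3) by simp
  then obtain K where K: "finite K" "cball (0::'a) R \<subseteq> (\<Union>z\<in>K. ball z (\<delta> / 2))"
    using seq_compact_imp_totally_bounded[OF compact_imp_seq_compact[OF compact_cball[of 0 R]], rule_format]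
    by blast
  obtain m r where mr: "K = r ` {i. i < (m::nat)}"
    using finite_imp_nat_seg_image_inj_on[OF K(1)] by blast
  have cover: "\<exists>j<m. x \<in> ball (r j) (\<delta> / 2)" if "x \<in> S" for x
  proof -
    have "x \<in> cball 0 R" using that R by auto
    then obtain z where "z \<in> K" "x \<in> ball z (\<delta> / 2)" using K(2) by blast
    moreover obtain j where "j < m" "z = r j" using \<open>z \<in> K\<close> mr by auto
    ultimately show ?thesis by auto
  qed
  define Q where "Q j = S \<inter> ball (r j) (\<delta> / 2) - (\<Union>l<j. ball (r l) (\<delta> / 2))" for j
  show thesis
  proof (rule that)
    show "Q j \<in> sets borel" for j
      unfolding Q_def using assms(1) by (intro sets.Diff sets.Int sets.finite_UN) auto
    show "Q j \<subseteq> S" for j by (auto simp: Q_def)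
    show "dist x x' < \<delta>" if "x \<in> Q j" "x' \<in> Q j" for j x x'
    proof -
      have "x \<in> ball (r j) (\<delta> / 2)" "x' \<in> ball (r j) (\<delta> / 2)" using that unfolding Q_def by blast+
      then show ?thesis using dist_triangle_half_r[of "r j" x \<delta> x'] by simp
    qed
    show "disjoint_family_on Q {..<m}"
      unfolding disjoint_family_on_def
    proof (intro ballI impI)
      fix j j' :: nat assume "j \<noteq> j'"
      then consider "j < j'" | "j' < j" by linarith
      then show "Q j \<inter> Q j' = {}" unfolding Q_def by cases blast+
    qed
    show "(\<Union>j<m. Q j) = S"
    proof
      show "S \<subseteq> (\<Union>j<m. Q j)"
      proof
        fix x assume "x \<in> S"
        define j where "j = (LEAST j. j < m \<and> x \<in> ball (r j) (\<delta> / 2))"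
        have j: "j < m \<and> x \<in> ball (r j) (\<delta> / 2)"
          unfolding j_def using cover[OF \<open>x \<in> S\<close>] LeastI_ex[of "\<lambda>j. j < m \<and> x \<in> ball (r j) (\<delta> / 2)"]
          by blast
        have "\<not> (l < m \<and> x \<in> ball (r l) (\<delta> / 2))" if "l < j" for l
          using that unfolding j_def by (rule not_less_Least)
        then have "x \<notin> (\<Union>l<j. ball (r l) (\<delta> / 2))" using j by auto
        then show "x \<in> (\<Union>j<m. Q j)" using \<open>x \<in> S\<close> j by (auto simp: Q_def)
      qed
    qed (auto simp: Q_def)
  qed
qed

lemma Borel_partition_small_oscillation:
  fixes S :: "'a::euclidean_space set"
  assumes "S \<in> sets borel" "bounded S" "0 < p" "0 < \<eta>"
  obtains m :: nat and Q r where "\<And>j. j < m \<Longrightarrow> Q j \<in> sets borel" "\<And>j. j < m \<Longrightarrow> Q j \<subseteq> S"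
    "disjoint_family_on Q {..<m}" "(\<Union>j<m. Q j) = S"
    "\<And>j x y. j < m \<Longrightarrow> x \<in> Q j \<Longrightarrow> y \<in> S \<Longrightarrow> \<bar>norm (x - y) powr p - norm (r j - y) powr p\<bar> < \<eta>"
proof -
  obtain \<delta> where "0 < \<delta>" and \<delta>: "\<And>x x' y. x \<in> S \<Longrightarrow> x' \<in> S \<Longrightarrow> y \<in> S \<Longrightarrow> dist x x' < \<delta> \<Longrightarrow>
      \<bar>norm (x - y) powr p - norm (x' - y) powr p\<bar> < \<eta>"
    using uniformly_continuous_norm_diff_powr[OF assms(2-4)] by blast
  obtain m :: nat and Q where Q_borel: "\<And>j. j < m \<Longrightarrow> Q j \<in> sets borel"
    and Q_sub: "\<And>j. j < m \<Longrightarrow> Q j \<subseteq> S"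
    and Q_small: "\<And>j x x'. j < m \<Longrightarrow> x \<in> Q j \<Longrightarrow> x' \<in> Q j \<Longrightarrow> dist x x' < \<delta>"
    and Q_disj: "disjoint_family_on Q {..<m}" and Q_cover: "(\<Union>j<m. Q j) = S"
    using Borel_partition_small_diameter[OF assms(1,2) \<open>0 < \<delta>\<close>] by blast
  define r where "r j = (SOME x. x \<in> Q j)" for j
  show thesis
  proof (rule that[OF Q_borel Q_sub Q_disj Q_cover])
    fix j x y assume "j < m" "x \<in> Q j" "y \<in> S"
    have "r j \<in> Q j" unfolding r_def using \<open>x \<in> Q j\<close> by (rule someI)
    then show "\<bar>norm (x - y) powr p - norm (r j - y) powr p\<bar> < \<eta>"
      using \<delta>[OF _ _ \<open>y \<in> S\<close> Q_small[OF \<open>j < m\<close> \<open>x \<in> Q j\<close>]] Q_sub[OF \<open>j < m\<close>] \<open>x \<in> Q j\<close> by blast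
  qed
qed

lemma hyperplane_null_sets_lborel:
  fixes b :: "'a::euclidean_space"
  assumes "b \<noteq> 0"
  shows "{x. b \<bullet> x = t} \<in> null_sets lborel"
proof -
  have "{x::'a. b \<bullet> x = t} \<in> null_sets lebesgue"
    using negligible_hyperplane[of b t] assms by (simp add: negligible_iff_null_sets)
  moreover have "{x::'a. b \<bullet> x = t} \<in> sets lborel" by measurable
  ultimately show ?thesis by (metis null_sets_completion_iff sets_lborel)
qed

lemma exists_Borel_subset_measure_eq:
  fixes M :: "'a::euclidean_space measure"
  assumes "finite_measure M" and sets_M[measurable_cong]: "sets M = sets borel"
    and ac: "absolutely_continuous lborel M"
    and Q[measurable]: "Q \<in> sets borel" and s: "0 \<le> s" "s \<le> measure M Q"
  obtains P where "P \<in> sets borel" "P \<subseteq> Q" "measure M P = s"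
proof -
  \<comment> \<open>\<open>M\<close> charges no hyperplane, so the distribution function of \<open>b \<bullet> x\<close> on \<open>Q\<close> is continuous\<close>
  interpret M: finite_measure M by fact
  obtain b :: 'a where "b \<in> Basis" using nonempty_Basis by blast
  then have "b \<noteq> 0" by auto
  define N where "N = distr (density M (indicator Q)) borel (\<lambda>x. b \<bullet> x)"
  have N: "measure N A = measure M (Q \<inter> {x. b \<bullet> x \<in> A})" if [measurable]: "A \<in> sets borel" for A
  proof -
    have "measure N A = measure (density M (indicator Q)) ((\<lambda>x. b \<bullet> x) -` A \<inter> space M)"
      unfolding N_def by (subst measure_distr) auto
    also have "\<dots> = measure M (Q \<inter> {x. b \<bullet> x \<in> A})"
      by (subst measure_restricted) (auto simp: vimage_def Int_commute sets_eq_imp_space_eq[OF sets_M])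
    finally show ?thesis .
  qed
  interpret N: finite_borel_measure N
  proof -
    have "finite_measure N" unfolding N_def
      by (intro finite_measure.finite_measure_distr M.finite_measure_restricted) auto
    then show "finite_borel_measure N"
      by (simp add: finite_borel_measure_def finite_borel_measure_axioms_def N_def)
  qed
  have cdf_N: "cdf N t = measure M (Q \<inter> {x. b \<bullet> x \<le> t})" for t
    using N[of "{..t}"] by (simp add: cdf_def)
  have "isCont (cdf N) t" for t
  proof -
    have "{x. b \<bullet> x = t} \<in> null_sets M"
      using ac hyperplane_null_sets_lborel[OF \<open>b \<noteq> 0\<close>] by (auto simp: absolutely_continuous_def)
    then have "Q \<inter> {x. b \<bullet> x = t} \<in> null_sets M"
      by (rule null_sets_subset) auto
    then have "measure M (Q \<inter> {x. b \<bullet> x = t}) = 0"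
      by (rule measure_eq_0_null_sets)
    then show ?thesis using N[of "{t}"] by (simp add: N.isCont_cdf)
  qed
  then have cont: "continuous_on {a..c} (cdf N)" for a c
    by (intro continuous_at_imp_continuous_on) auto
  have total: "measure N (space N) = measure M Q"
    using N[of UNIV] by (simp add: N.borel_UNIV)
  consider "s = 0" | "s = measure M Q" | "0 < s" "s < measure M Q"
    using s by linarith
  then show thesis
  proof cases
    case 1 then show ?thesis by (intro that[of "{}"]) auto
  next
    case 2 then show ?thesis by (intro that[of Q]) auto
  next
    case 3
    obtain a where a: "cdf N a < s"
      using order_tendstoD(2)[OF N.cdf_lim_at_bot \<open>0 < s\<close>] by (auto simp: eventually_at_bot_linorder)
    obtain c where c: "s < cdf N c"
      using order_tendstoD(1)[OF N.cdf_lim_at_top, of s] 3 total by (auto simp: eventually_at_top_linorder)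
    have "a \<le> c"
      using N.cdf_nondecreasing[of c a] a c by (cases "a \<le> c") auto
    then obtain t where "cdf N t = s"
      using IVT'[of "cdf N" a s c] a c cont by force
    then show ?thesis by (intro that[of "Q \<inter> {x. b \<bullet> x \<le> t}"]) (auto simp: cdf_N)
  qed
qed

lemma exists_Borel_partition_measures_eq:
  fixes M :: "'a::euclidean_space measure" and k :: nat
  assumes "finite_measure M" "sets M = sets borel" "absolutely_continuous lborel M"
    and "Q \<in> sets borel" "0 < k" "\<And>i. i < k \<Longrightarrow> 0 \<le> w i" "(\<Sum>i<k. w i) = measure M Q"
  obtains P where "\<And>i. i < k \<Longrightarrow> P i \<in> sets borel" "\<And>i. i < k \<Longrightarrow> P i \<subseteq> Q"
    "\<And>i. i < k \<Longrightarrow> measure M (P i) = w i" "disjoint_family_on P {..<k}" "(\<Union>i<k. P i) = Q"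
  using assms(4-)
proof (induction k arbitrary: Q thesis)
  case 0 then show ?case by simp
next
  case (Suc k)
  show ?case
  proof (cases "k = 0")
    case True
    then show ?thesis using Suc.prems by (intro Suc.prems(1)[of "\<lambda>_. Q"]) (auto simp: disjoint_family_on_def)
  next
    case False
    interpret M: finite_measure M by fact
    have "0 \<le> (\<Sum>i<k. w i)" using Suc.prems(4) by (intro sum_nonneg) auto
    then have "w k \<le> measure M Q" using Suc.prems(5) by simp
    then obtain P' where P': "P' \<in> sets borel" "P' \<subseteq> Q" "measure M P' = w k"
      using exists_Borel_subset_measure_eq[OF assms(1-3) Suc.prems(2)] Suc.prems(4) by blast
    have "(\<Sum>i<k. w i) = measure M (Q - P')"
      using P' Suc.prems(2,5) assms(2) by (subst M.finite_measure_Diff) auto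
    then obtain P where P: "\<And>i. i < k \<Longrightarrow> P i \<in> sets borel" "\<And>i. i < k \<Longrightarrow> P i \<subseteq> Q - P'"
      "\<And>i. i < k \<Longrightarrow> measure M (P i) = w i" "disjoint_family_on P {..<k}" "(\<Union>i<k. P i) = Q - P'"
      using Suc.IH[of "Q - P'"] Suc.prems(2,4) P'(1) False by auto
    show ?thesis
    proof (rule Suc.prems(1)[of "P(k := P')"])
      show "disjoint_family_on (P(k := P')) {..<Suc k}"
        using P(2,4) by (fastforce simp: disjoint_family_on_def less_Suc_eq)
      show "(\<Union>i<Suc k. (P(k := P')) i) = Q"
        using P(5) P'(2) by (auto simp: lessThan_Suc)
    qed (use P P' in \<open>auto simp: less_Suc_eq\<close>)
  qed
qed

lemma exists_Borel_refinement_measures_eq: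
  fixes M :: "'a::euclidean_space measure" and k m :: nat
  assumes "finite_measure M" "sets M = sets borel" "absolutely_continuous lborel M"
    and "\<And>j. j < m \<Longrightarrow> Q j \<in> sets borel" "0 < k" "\<And>j i. i < k \<Longrightarrow> 0 \<le> w j i"
    and "\<And>j. j < m \<Longrightarrow> (\<Sum>i<k. w j i) = measure M (Q j)"
  obtains P where "\<And>j i. j < m \<Longrightarrow> i < k \<Longrightarrow> P j i \<in> sets borel"
    "\<And>j i. j < m \<Longrightarrow> i < k \<Longrightarrow> P j i \<subseteq> Q j"
    "\<And>j i. j < m \<Longrightarrow> i < k \<Longrightarrow> measure M (P j i) = w j i"
    "\<And>j. j < m \<Longrightarrow> disjoint_family_on (P j) {..<k}" "\<And>j. j < m \<Longrightarrow> (\<Union>i<k. P j i) = Q j"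
proof -
  have "\<exists>P. (\<forall>i<k. P i \<in> sets borel \<and> P i \<subseteq> Q j \<and> measure M (P i) = w j i) \<and>
      disjoint_family_on P {..<k} \<and> (\<Union>i<k. P i) = Q j" if "j < m" for j
    using exists_Borel_partition_measures_eq[OF assms(1-3) assms(4)[OF that] assms(5)
        assms(6) assms(7)[OF that]]
    by metis
  then obtain P where "\<And>j. j < m \<Longrightarrow> (\<forall>i<k. P j i \<in> sets borel \<and> P j i \<subseteq> Q j \<and> measure M (P j i) = w j i) \<and>
      disjoint_family_on (P j) {..<k} \<and> (\<Union>i<k. P j i) = Q j"
    by metis
  then show thesis by (intro that[of P]) auto
qed

section \<open>Probability densities\<close>

locale prob_density =
  fixes \<Omega> :: "'a::euclidean_space set" and f :: "'a \<Rightarrow> real"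
  assumes \<Omega>_borel[measurable]: "\<Omega> \<in> sets borel"
    and f_nonneg: "\<And>x. x \<in> \<Omega> \<Longrightarrow> 0 \<le> f x"
    and f_integrable: "set_integrable lborel \<Omega> f"
    and f_integral: "(\<integral>x\<in>\<Omega>. f x \<partial>lborel) = 1"
begin

abbreviation \<mu> :: "'a measure" where "\<mu> \<equiv> fmeas \<Omega> f"

lemma borel_measurable_density[measurable]: "(\<lambda>x. indicator \<Omega> x * ennreal (f x)) \<in> borel_measurable borel"
proof -
  have "(\<lambda>x. indicator \<Omega> x *\<^sub>R f x) \<in> borel_measurable lborel"
    using f_integrable unfolding set_integrable_def by (rule borel_measurable_integrable)
  then have "(\<lambda>x. ennreal (indicator \<Omega> x * f x)) \<in> borel_measurable borel" by simp
  then show ?thesis by (rule measurable_cong[THEN iffD1, rotated]) (simp split: split_indicator)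
qed

lemma sets_fmeas[simp, measurable_cong]: "sets \<mu> = sets borel"
  by (simp add: fmeas_def)

lemma space_fmeas[simp]: "space \<mu> = UNIV"
  by (simp add: fmeas_def)

lemma emeasure_fmeas:
  "A \<in> sets borel \<Longrightarrow> emeasure \<mu> A = (\<integral>\<^sup>+x. indicator \<Omega> x * ennreal (f x) * indicator A x \<partial>lborel)"
  unfolding fmeas_def by (rule emeasure_density) auto

lemma nn_integral_fmeas:
  "g \<in> borel_measurable borel \<Longrightarrow> (\<integral>\<^sup>+x. g x \<partial>\<mu>) = (\<integral>\<^sup>+x. indicator \<Omega> x * ennreal (f x) * g x \<partial>lborel)"
  unfolding fmeas_def by (rule nn_integral_density) auto

lemma emeasure_fmeas_compl: "emeasure \<mu> (- \<Omega>) = 0"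
proof -
  have "emeasure \<mu> (- \<Omega>) = (\<integral>\<^sup>+x. indicator \<Omega> x * ennreal (f x) * indicator (- \<Omega>) x \<partial>lborel)"
    by (rule emeasure_fmeas) simp
  also have "\<dots> = (\<integral>\<^sup>+x. 0 \<partial>(lborel :: 'a measure))"
    by (intro nn_integral_cong) (simp split: split_indicator)
  finally show ?thesis by simp
qed

lemma prob_space_fmeas: "prob_space \<mu>"
proof
  have "emeasure \<mu> UNIV = (\<integral>\<^sup>+x. ennreal (indicator \<Omega> x * f x) \<partial>lborel)"
    by (simp add: emeasure_fmeas) (intro nn_integral_cong; simp split: split_indicator)
  also have "\<dots> = ennreal (\<integral>x. indicator \<Omega> x * f x \<partial>lborel)"
    using f_integrable f_nonneg unfolding set_integrable_def
    by (intro nn_integral_eq_integral) (auto simp: indicator_def)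
  also have "(\<integral>x. indicator \<Omega> x * f x \<partial>lborel) = 1"
    using f_integral by (simp add: set_lebesgue_integral_def)
  finally show "emeasure \<mu> (space \<mu>) = 1" by simp
qed

lemma finite_measure_fmeas: "finite_measure \<mu>"
  using prob_space_fmeas by (simp add: prob_space_def)

lemma emeasure_fmeas_domain: "emeasure \<mu> \<Omega> = 1"
proof -
  have "emeasure \<mu> \<Omega> = emeasure \<mu> UNIV"
    using emeasure_fmeas_compl by (intro emeasure_eq_AE AE_I[of _ _ "- \<Omega>"]) auto
  then show ?thesis using prob_space.emeasure_space_1[OF prob_space_fmeas] by simp
qed

lemma absolutely_continuous_fmeas: "absolutely_continuous lborel \<mu>"
  unfolding fmeas_def by (rule absolutely_continuousI_density) simp

lemma set_nn_integral_density_eq: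
  assumes [measurable]: "A \<in> sets borel" "g \<in> borel_measurable borel"
    and "A \<subseteq> \<Omega>" "\<And>x. 0 \<le> g x" "0 \<le> a"
  shows "(\<integral>\<^sup>+x\<in>A. ennreal ((g x + a) * f x) \<partial>lborel) =
    (\<integral>\<^sup>+x. ennreal (g x) * indicator A x \<partial>\<mu>) + ennreal (a * measure \<mu> A)"
proof -
  have "ennreal ((g x + a) * f x) * indicator A x =
      indicator \<Omega> x * ennreal (f x) * (ennreal (g x) * indicator A x) +
      ennreal a * (indicator \<Omega> x * ennreal (f x) * indicator A x)" for x
    using assms(3-5) f_nonneg[of x]
    by (cases "x \<in> A") (auto simp: distrib_left distrib_right ennreal_plus ennreal_mult ac_simps subset_eq)
  then have "(\<integral>\<^sup>+x\<in>A. ennreal ((g x + a) * f x) \<partial>lborel) =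
      (\<integral>\<^sup>+x. ennreal (g x) * indicator A x \<partial>\<mu>) + ennreal a * emeasure \<mu> A"
    by (simp add: nn_integral_add nn_integral_cmult nn_integral_fmeas emeasure_fmeas)
  also have "ennreal a * emeasure \<mu> A = ennreal (a * measure \<mu> A)"
    using assms(5) finite_measure.emeasure_eq_measure[OF finite_measure_fmeas]
    by (simp add: ennreal_mult)
  finally show ?thesis .
qed

lemma partition_objective_eq:
  assumes A: "A \<in> partitions k \<Omega> f"
    and h_nonneg: "\<And>i t. i < k \<Longrightarrow> 0 \<le> t \<Longrightarrow> t \<le> 1 \<Longrightarrow> 0 \<le> h i t"
  shows "(\<Sum>i<k. \<integral>\<^sup>+x\<in>A i. ennreal ((norm (x - xs i) powr p + h i (measure \<mu> (A i))) * f x) \<partial>lborel) =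
    (\<Sum>i<k. \<integral>\<^sup>+x. ennreal (norm (x - xs i) powr p) * indicator (A i) x \<partial>\<mu>) +
    (\<Sum>i<k. ennreal (h i (measure \<mu> (A i)) * measure \<mu> (A i)))"
proof -
  have "(\<integral>\<^sup>+x\<in>A i. ennreal ((norm (x - xs i) powr p + h i (measure \<mu> (A i))) * f x) \<partial>lborel) =
      (\<integral>\<^sup>+x. ennreal (norm (x - xs i) powr p) * indicator (A i) x \<partial>\<mu>) +
      ennreal (h i (measure \<mu> (A i)) * measure \<mu> (A i))" if "i < k" for i
  proof (rule set_nn_integral_density_eq)
    show "0 \<le> h i (measure \<mu> (A i))"
      using h_nonneg[OF that] prob_space.prob_le_1[OF prob_space_fmeas] by simp
  qed (use A that in \<open>auto simp: partitions_def\<close>)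
  then show ?thesis by (simp add: sum.distrib)
qed

lemma partition_AE_eq_disjoint:
  assumes A: "A \<in> partitions k \<Omega> f" and "0 < k"
  obtains B where "\<And>i. i < k \<Longrightarrow> B i \<in> sets borel" "disjoint_family_on B {..<k}"
    "(\<Union>i<k. B i) = UNIV" "\<And>i. i < k \<Longrightarrow> AE x in \<mu>. x \<in> B i \<longleftrightarrow> x \<in> A i"
proof -
  have A_borel[measurable]: "\<And>i. i < k \<Longrightarrow> A i \<in> sets borel"
    and A_overlap: "\<And>i j. i < k \<Longrightarrow> j < k \<Longrightarrow> i \<noteq> j \<Longrightarrow> emeasure \<mu> (A i \<inter> A j) = 0"
    and A_cover: "emeasure \<mu> (\<Omega> - (\<Union>i<k. A i)) = 0"
    using A by (auto simp: partitions_def)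
  define B where "B i = A i - (\<Union>j<i. A j) \<union> (if i = 0 then - (\<Union>j<k. A j) else {})" for i
  define Z where "Z = - \<Omega> \<union> (\<Omega> - (\<Union>i<k. A i)) \<union> (\<Union>i<k. \<Union>j\<in>{..<k} - {i}. A i \<inter> A j)"
  have "Z \<in> null_sets \<mu>"
    unfolding Z_def using emeasure_fmeas_compl A_cover A_overlap
    by (intro null_sets.Un null_sets_UN') (auto intro!: null_setsI)
  from AE_not_in[OF this] have AE_good: "AE x in \<mu>. x \<notin> Z" .
  show thesis
  proof (rule that)
    show "B i \<in> sets borel" if "i < k" for i
      unfolding B_def using that by (intro sets.Un sets.Diff) auto
    show "disjoint_family_on B {..<k}"
      unfolding disjoint_family_on_def
    proof (intro ballI impI)
      fix i j :: nat assume "i \<in> {..<k}" "j \<in> {..<k}" "i \<noteq> j"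
      then consider "i < j" "j < k" | "j < i" "i < k" by fastforce
      then show "B i \<inter> B j = {}" unfolding B_def by cases (auto split: if_splits)
    qed
    show "(\<Union>i<k. B i) = UNIV"
    proof (intro set_eqI iffI)
      fix x :: 'a
      show "x \<in> (\<Union>i<k. B i)"
      proof (cases "\<exists>i<k. x \<in> A i")
        case True
        define i where "i = (LEAST i. i < k \<and> x \<in> A i)"
        have i: "i < k \<and> x \<in> A i"
          unfolding i_def using True LeastI_ex[of "\<lambda>i. i < k \<and> x \<in> A i"] by blast
        have "\<not> (j < k \<and> x \<in> A j)" if "j < i" for j
          using that unfolding i_def by (rule not_less_Least)
        then have "x \<in> B i" using i unfolding B_def by auto
        then show ?thesis using i by blast
      next
        case False
        then have "x \<in> B 0" unfolding B_def by auto
        then show ?thesis using \<open>0 < k\<close> by blast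
      qed
    qed simp
    show "AE x in \<mu>. x \<in> B i \<longleftrightarrow> x \<in> A i" if "i < k" for i
      using AE_good
    proof eventually_elim
      case (elim x)
      have "x \<in> (\<Union>i<k. A i)" using elim unfolding Z_def by blast
      then obtain j where j: "j < k" "x \<in> A j" by blast
      have unique: "l = j" if "l < k" "x \<in> A l" for l
      proof (rule ccontr)
        assume "l \<noteq> j"
        then have "x \<in> (\<Union>i<k. \<Union>j\<in>{..<k} - {i}. A i \<inter> A j)" using that j by blast
        then show False using elim unfolding Z_def by blast
      qed
      show ?case
      proof
        assume "x \<in> B i"
        then show "x \<in> A i" using j unfolding B_def by (auto split: if_splits)
      next
        assume "x \<in> A i"
        moreover have "x \<notin> A l" if "l < i" for l
          using unique[of l] unique[OF \<open>i < k\<close> \<open>x \<in> A i\<close>] that \<open>i < k\<close> by auto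
        ultimately show "x \<in> B i" unfolding B_def by blast
      qed
    qed
  qed
qed

lemma Wpp_le_partition_transport_cost:
  assumes A: "A \<in> partitions k \<Omega> f"
  defines "c \<equiv> \<lambda>i. if i < k then measure \<mu> (A i) else 0"
  shows "c \<in> simplex_S k"
    and "Wpp p \<mu> (dirac_comb k c xs)
      \<le> (\<Sum>i<k. \<integral>\<^sup>+x. ennreal (norm (x - xs i) powr p) * indicator (A i) x \<partial>\<mu>)"
proof -
  have A_borel: "\<And>i. i < k \<Longrightarrow> A i \<in> sets borel" using A by (auto simp: partitions_def)
  have "0 < k"
  proof (rule ccontr)
    assume "\<not> 0 < k"
    then have "emeasure \<mu> \<Omega> = 0" using A by (simp add: partitions_def split: if_splits)
    then show False using emeasure_fmeas_domain by simp
  qed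
  then obtain B where B_borel[measurable]: "\<And>i. i < k \<Longrightarrow> B i \<in> sets borel"
    and B_disj: "disjoint_family_on B {..<k}" and B_cover: "(\<Union>i<k. B i) = UNIV"
    and B_AE: "\<And>i. i < k \<Longrightarrow> AE x in \<mu>. x \<in> B i \<longleftrightarrow> x \<in> A i"
    using partition_AE_eq_disjoint[OF A] by blast
  have measure_B: "measure \<mu> (B i) = c i" if "i < k" for i
    unfolding c_def using that B_AE[OF that] A_borel[OF that] B_borel[OF that]
    by (simp add: measure_eq_AE)
  have "(\<Sum>i<k. c i) = measure \<mu> (\<Union>i<k. B i)"
    using B_disj measure_B
    by (simp add: finite_measure.finite_measure_finite_Union[OF finite_measure_fmeas] subset_eq)
  also have "\<dots> = 1"
    using B_cover prob_space.prob_space[OF prob_space_fmeas] by simp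
  finally show "c \<in> simplex_S k" by (auto simp: simplex_S_def c_def)
  define T where "T x = (\<Sum>i<k. indicator (B i) x *\<^sub>R xs i)" for x
  have [measurable]: "T \<in> borel_measurable borel" unfolding T_def by measurable
  have "distr \<mu> lborel T = dirac_comb k c xs"
    unfolding T_def
    using distr_sum_indicator_scaleR[OF finite_measure_fmeas sets_fmeas B_borel B_disj B_cover]
    by (simp add: measure_B cong: dirac_comb_cong)
  then have "Wpp p \<mu> (dirac_comb k c xs) \<le> (\<integral>\<^sup>+x. ennreal (norm (x - T x) powr p) \<partial>\<mu>)"
    using Wpp_le_transport_map[OF prob_space_fmeas sets_fmeas, of T p] by simp
  also have "\<dots> = (\<integral>\<^sup>+x. (\<Sum>i<k. ennreal (norm (x - xs i) powr p) * indicator (B i) x) \<partial>\<mu>)"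
  proof (intro nn_integral_cong)
    fix x
    obtain j where "j < k" "x \<in> B j" using B_cover by blast
    then show "ennreal (norm (x - T x) powr p) = (\<Sum>i<k. ennreal (norm (x - xs i) powr p) * indicator (B i) x)"
      unfolding T_def
      by (simp only: sum_indicator_scaleR_disjoint[OF B_disj \<open>j < k\<close> \<open>x \<in> B j\<close>]
          sum_indicator_mult_disjoint[OF B_disj \<open>j < k\<close> \<open>x \<in> B j\<close>])
  qed
  also have "\<dots> = (\<Sum>i<k. \<integral>\<^sup>+x. ennreal (norm (x - xs i) powr p) * indicator (B i) x \<partial>\<mu>)"
    by (intro nn_integral_sum) auto
  also have "\<dots> = (\<Sum>i<k. \<integral>\<^sup>+x. ennreal (norm (x - xs i) powr p) * indicator (A i) x \<partial>\<mu>)"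
  proof (intro sum.cong refl nn_integral_cong_AE)
    fix i assume "i \<in> {..<k}"
    then have "AE x in \<mu>. indicator (B i) x = (indicator (A i) x :: ennreal)"
      using B_AE[of i] by (auto elim!: eventually_mono simp: indicator_def)
    then show "AE x in \<mu>. ennreal (norm (x - xs i) powr p) * indicator (B i) x =
        ennreal (norm (x - xs i) powr p) * indicator (A i) x"
      by eventually_elim simp
  qed
  finally show "Wpp p \<mu> (dirac_comb k c xs)
      \<le> (\<Sum>i<k. \<integral>\<^sup>+x. ennreal (norm (x - xs i) powr p) * indicator (A i) x \<partial>\<mu>)" .
qed

lemma partition_of_cell_refinement:
  fixes k m :: nat
  assumes Q: "\<And>j. j < m \<Longrightarrow> Q j \<subseteq> \<Omega>" "disjoint_family_on Q {..<m}" "(\<Union>j<m. Q j) = \<Omega>"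
    and P: "\<And>j i. j < m \<Longrightarrow> i < k \<Longrightarrow> P j i \<in> sets borel" "\<And>j i. j < m \<Longrightarrow> i < k \<Longrightarrow> P j i \<subseteq> Q j"
      "\<And>j. j < m \<Longrightarrow> disjoint_family_on (P j) {..<k}" "\<And>j. j < m \<Longrightarrow> (\<Union>i<k. P j i) = Q j"
  shows "(\<lambda>i. \<Union>j<m. P j i) \<in> partitions k \<Omega> f"
proof -
  define A where "A = (\<lambda>i. \<Union>j<m. P j i)"
  have "A i \<inter> A i' = {}" if "i < k" "i' < k" "i \<noteq> i'" for i i'
  proof -
    have "P j i \<inter> P j' i' = {}" if "j < m" "j' < m" for j j'
    proof (cases "j = j'")
      case True
      then show ?thesis
        using P(3)[OF \<open>j < m\<close>] \<open>i < k\<close> \<open>i' < k\<close> \<open>i \<noteq> i'\<close> unfolding disjoint_family_on_def by blast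
    next
      case False
      then have "Q j \<inter> Q j' = {}" using Q(2) that unfolding disjoint_family_on_def by blast
      then show ?thesis using P(2)[OF \<open>j < m\<close> \<open>i < k\<close>] P(2)[OF \<open>j' < m\<close> \<open>i' < k\<close>] by blast
    qed
    then show ?thesis unfolding A_def by blast
  qed
  moreover have "(\<Union>i<k. A i) = (\<Union>j<m. \<Union>i<k. P j i)" unfolding A_def by blast
  then have "(\<Union>i<k. A i) = \<Omega>" using P(4) Q(3) by simp
  moreover have "A i \<in> sets borel" if "i < k" for i
    using P(1) that unfolding A_def by (intro sets.finite_UN) auto
  moreover have "A i \<subseteq> \<Omega>" if "i < k" for i
    using P(2) Q(1) that unfolding A_def by blast
  ultimately show ?thesis unfolding A_def[symmetric] partitions_def by simp
qed

lemma exists_partition_refining_cells: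
  fixes k m :: nat
  assumes Q_borel: "\<And>j. j < m \<Longrightarrow> Q j \<in> sets borel" and Q_sub: "\<And>j. j < m \<Longrightarrow> Q j \<subseteq> \<Omega>"
    and Q_disj: "disjoint_family_on Q {..<m}" and Q_cover: "(\<Union>j<m. Q j) = \<Omega>"
    and "0 < k" and w_nonneg: "\<And>j i. i < k \<Longrightarrow> 0 \<le> w j i"
    and w_row: "\<And>j. j < m \<Longrightarrow> (\<Sum>i<k. w j i) = measure \<mu> (Q j)"
  obtains P where "\<And>j i. j < m \<Longrightarrow> i < k \<Longrightarrow> P j i \<in> sets borel"
    "\<And>j i. j < m \<Longrightarrow> i < k \<Longrightarrow> P j i \<subseteq> Q j"
    "\<And>j i. j < m \<Longrightarrow> i < k \<Longrightarrow> measure \<mu> (P j i) = w j i"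
    "\<And>i. i < k \<Longrightarrow> disjoint_family_on (\<lambda>j. P j i) {..<m}"
    "(\<lambda>i. \<Union>j<m. P j i) \<in> partitions k \<Omega> f"
proof (rule exists_Borel_refinement_measures_eq[OF finite_measure_fmeas sets_fmeas
      absolutely_continuous_fmeas Q_borel \<open>0 < k\<close> w_nonneg w_row])
  fix P assume P_borel: "\<And>j i. j < m \<Longrightarrow> i < k \<Longrightarrow> P j i \<in> sets borel"
    and P_sub: "\<And>j i. j < m \<Longrightarrow> i < k \<Longrightarrow> P j i \<subseteq> Q j"
    and P_measure: "\<And>j i. j < m \<Longrightarrow> i < k \<Longrightarrow> measure \<mu> (P j i) = w j i"
    and P_disj: "\<And>j. j < m \<Longrightarrow> disjoint_family_on (P j) {..<k}"
    and P_cover: "\<And>j. j < m \<Longrightarrow> (\<Union>i<k. P j i) = Q j"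
  have P_disj_cells: "disjoint_family_on (\<lambda>j. P j i) {..<m}" if "i < k" for i
    using Q_disj P_sub[OF _ that] unfolding disjoint_family_on_def by blast
  have "(\<lambda>i. \<Union>j<m. P j i) \<in> partitions k \<Omega> f"
    by (rule partition_of_cell_refinement[OF Q_sub Q_disj Q_cover P_borel P_sub P_disj P_cover])
  with P_borel P_sub P_measure P_disj_cells show thesis by (rule that)
qed

lemma exists_partition_transport_cost_le_coupling:
  fixes k :: nat and xs :: "nat \<Rightarrow> 'a" and c :: "nat \<Rightarrow> real" and p \<eta> :: real
  assumes "bounded \<Omega>" "0 < p" and xs: "\<And>i. i < k \<Longrightarrow> xs i \<in> \<Omega>" and c: "c \<in> simplex_S k"
    and \<gamma>: "\<gamma> \<in> couplings \<mu> (dirac_comb k c xs)" and "0 < \<eta>"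
  obtains A where "A \<in> partitions k \<Omega> f" "\<And>i. i < k \<Longrightarrow> measure \<mu> (A i) = c i"
    "(\<Sum>i<k. \<integral>\<^sup>+x. ennreal (norm (x - xs i) powr p) * indicator (A i) x \<partial>\<mu>)
       \<le> (\<integral>\<^sup>+z. ennreal (norm (fst z - snd z) powr p) \<partial>\<gamma>) + ennreal \<eta>"
proof -
  have c_nonneg: "\<And>i. i < k \<Longrightarrow> 0 \<le> c i" and "(\<Sum>i<k. c i) = 1"
    using c by (auto simp: simplex_S_def)
  then have "0 < k" by (intro gr0I) auto
  have "0 < \<eta> / 2" using \<open>0 < \<eta>\<close> by simp
  then obtain m :: nat and Q r where Q_borel: "\<And>j. j < m \<Longrightarrow> Q j \<in> sets borel"
    and Q_sub: "\<And>j. j < m \<Longrightarrow> Q j \<subseteq> \<Omega>" and Q_disj: "disjoint_family_on Q {..<m}"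
    and Q_cover: "(\<Union>j<m. Q j) = \<Omega>"
    and r_close: "\<And>j x y. j < m \<Longrightarrow> x \<in> Q j \<Longrightarrow> y \<in> \<Omega> \<Longrightarrow>
      \<bar>norm (x - y) powr p - norm (r j - y) powr p\<bar> < \<eta> / 2"
    using Borel_partition_small_oscillation[OF \<Omega>_borel assms(1,2)] by blast
  obtain w where w_nonneg: "\<And>j i. i < k \<Longrightarrow> 0 \<le> w j i"
    and w_col: "\<And>i. i < k \<Longrightarrow> (\<Sum>j<m. w j i) = c i"
    and w_row: "\<And>j. j < m \<Longrightarrow> (\<Sum>i<k. w j i) = measure \<mu> (Q j)"
    and w_fibre: "\<And>j a. j < m \<Longrightarrow>
      (\<Sum>i<k. w j i * a (xs i)) = (\<Sum>y\<in>xs ` {..<k}. measure \<gamma> (Q j \<times> {y}) * a y)"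
  proof (rule exists_cell_weights_of_coupling[OF \<gamma> c_nonneg Q_borel Q_disj \<Omega>_borel Q_cover
        emeasure_fmeas_compl])
    fix w assume "\<And>j i. i < k \<Longrightarrow> 0 \<le> w j i" "\<And>i. i < k \<Longrightarrow> (\<Sum>j<m. w j i) = c i"
      "\<And>j. j < m \<Longrightarrow> (\<Sum>i<k. w j i) = measure \<mu> (Q j)"
      "\<And>j a. j < m \<Longrightarrow> (\<Sum>i<k. w j i * a (xs i)) = (\<Sum>y\<in>xs ` {..<k}. measure \<gamma> (Q j \<times> {y}) * a y)"
    then show thesis by (rule that)
  qed
  obtain P where P_borel: "\<And>j i. j < m \<Longrightarrow> i < k \<Longrightarrow> P j i \<in> sets borel"
    and P_sub: "\<And>j i. j < m \<Longrightarrow> i < k \<Longrightarrow> P j i \<subseteq> Q j"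
    and P_measure: "\<And>j i. j < m \<Longrightarrow> i < k \<Longrightarrow> measure \<mu> (P j i) = w j i"
    and P_disj: "\<And>i. i < k \<Longrightarrow> disjoint_family_on (\<lambda>j. P j i) {..<m}"
    and A_partition: "(\<lambda>i. \<Union>j<m. P j i) \<in> partitions k \<Omega> f"
  proof (rule exists_partition_refining_cells[OF Q_borel Q_sub Q_disj Q_cover \<open>0 < k\<close> w_nonneg w_row])
    fix P assume "\<And>j i. j < m \<Longrightarrow> i < k \<Longrightarrow> P j i \<in> sets borel"
      "\<And>j i. j < m \<Longrightarrow> i < k \<Longrightarrow> P j i \<subseteq> Q j"
      "\<And>j i. j < m \<Longrightarrow> i < k \<Longrightarrow> measure \<mu> (P j i) = w j i"
      "\<And>i. i < k \<Longrightarrow> disjoint_family_on (\<lambda>j. P j i) {..<m}"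
      "(\<lambda>i. \<Union>j<m. P j i) \<in> partitions k \<Omega> f"
    then show thesis by (rule that)
  qed
  define A where "A = (\<lambda>i. \<Union>j<m. P j i)"
  have A_measure: "measure \<mu> (A i) = c i" if "i < k" for i
  proof -
    have "measure \<mu> (A i) = (\<Sum>j<m. measure \<mu> (P j i))"
      unfolding A_def using P_borel that P_disj[OF that]
      by (intro finite_measure.finite_measure_finite_Union[OF finite_measure_fmeas]) auto
    then show ?thesis using P_measure that w_col[OF that] by simp
  qed
  define a where "a j y = norm (r j - y) powr p + \<eta> / 2" for j y
  have a_nonneg: "0 \<le> a j y" for j y using \<open>0 < \<eta>\<close> by (simp add: a_def)
  have "(\<Sum>i<k. \<integral>\<^sup>+x. ennreal (norm (x - xs i) powr p) * indicator (A i) x \<partial>\<mu>)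
      \<le> (\<Sum>i<k. ennreal (\<Sum>j<m. a j (xs i) * w j i))"
  proof (intro sum_mono)
    fix i assume "i \<in> {..<k}"
    then have "i < k" by simp
    have "(\<integral>\<^sup>+x. ennreal (norm (x - xs i) powr p) * indicator (A i) x \<partial>\<mu>)
        \<le> ennreal (\<Sum>j<m. a j (xs i) * measure \<mu> (P j i))"
      unfolding A_def
    proof (rule nn_integral_indicator_UN_le_sum[OF finite_measure_fmeas])
      fix j x assume "j \<in> {..<m}" "x \<in> P j i"
      then have "\<bar>norm (x - xs i) powr p - norm (r j - xs i) powr p\<bar> < \<eta> / 2"
        using r_close P_sub[of j i] xs[OF \<open>i < k\<close>] \<open>i < k\<close> by blast
      then show "ennreal (norm (x - xs i) powr p) \<le> ennreal (a j (xs i))"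
        unfolding a_def by (intro ennreal_leI) (simp only: abs_less_iff, linarith)
    qed (use P_borel P_disj \<open>i < k\<close> a_nonneg in auto)
    also have "\<dots> = ennreal (\<Sum>j<m. a j (xs i) * w j i)"
      using P_measure \<open>i < k\<close> by simp
    finally show "(\<integral>\<^sup>+x. ennreal (norm (x - xs i) powr p) * indicator (A i) x \<partial>\<mu>)
        \<le> ennreal (\<Sum>j<m. a j (xs i) * w j i)" .
  qed
  also have "\<dots> = ennreal (\<Sum>i<k. \<Sum>j<m. a j (xs i) * w j i)"
    by (rule sum_ennreal) (use a_nonneg w_nonneg in \<open>auto intro!: sum_nonneg\<close>)
  also have "\<dots> = ennreal (\<Sum>j<m. \<Sum>y\<in>xs ` {..<k}. a j y * measure \<gamma> (Q j \<times> {y}))"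
  proof -
    have "(\<Sum>i<k. \<Sum>j<m. a j (xs i) * w j i) = (\<Sum>j<m. \<Sum>i<k. w j i * a j (xs i))"
      by (subst sum.swap) (simp add: mult.commute)
    also have "\<dots> = (\<Sum>j<m. \<Sum>y\<in>xs ` {..<k}. a j y * measure \<gamma> (Q j \<times> {y}))"
      by (intro sum.cong refl) (simp add: w_fibre mult.commute)
    finally show ?thesis by simp
  qed
  also have "\<dots> \<le> (\<integral>\<^sup>+z. ennreal (norm (fst z - snd z) powr p) \<partial>\<gamma>) + ennreal \<eta>"
  proof (rule sum_cells_le_coupling_cost[OF \<gamma> Q_borel Q_disj])
    fix j x y assume "j < m" "x \<in> Q j" "y \<in> xs ` {..<k}"
    then have "\<bar>norm (x - y) powr p - norm (r j - y) powr p\<bar> < \<eta> / 2"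
      using r_close xs by blast
    then show "a j y \<le> norm (x - y) powr p + \<eta>"
      unfolding a_def by (simp only: abs_less_iff) linarith
  qed (use a_nonneg \<open>0 < \<eta>\<close> in auto)
  finally have "(\<Sum>i<k. \<integral>\<^sup>+x. ennreal (norm (x - xs i) powr p) * indicator (A i) x \<partial>\<mu>)
      \<le> (\<integral>\<^sup>+z. ennreal (norm (fst z - snd z) powr p) \<partial>\<gamma>) + ennreal \<eta>" .
  with A_partition A_measure show thesis unfolding A_def by (rule that)
qed

lemma INF_partition_objective_le:
  fixes xs :: "nat \<Rightarrow> 'a" and h :: "nat \<Rightarrow> real \<Rightarrow> real"
  assumes "bounded \<Omega>" "0 < p" "\<And>i. i < k \<Longrightarrow> xs i \<in> \<Omega>"
    and h_nonneg: "\<And>i t. i < k \<Longrightarrow> 0 \<le> t \<Longrightarrow> t \<le> 1 \<Longrightarrow> 0 \<le> h i t" and c: "c \<in> simplex_S k"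
  shows "(INF A\<in>partitions k \<Omega> f. \<Sum>i<k. \<integral>\<^sup>+x\<in>A i.
      ennreal ((norm (x - xs i) powr p + h i (measure \<mu> (A i))) * f x) \<partial>lborel)
    \<le> Wpp p \<mu> (dirac_comb k c xs) + (\<Sum>i<k. ennreal (h i (c i) * c i))"
  unfolding Wpp_def
proof (rule ennreal_le_INF_add_by_epsilon)
  fix \<gamma> and \<eta> :: real assume \<gamma>: "\<gamma> \<in> couplings \<mu> (dirac_comb k c xs)" and "0 < \<eta>"
  then obtain A where A: "A \<in> partitions k \<Omega> f" "\<And>i. i < k \<Longrightarrow> measure \<mu> (A i) = c i"
    and cost: "(\<Sum>i<k. \<integral>\<^sup>+x. ennreal (norm (x - xs i) powr p) * indicator (A i) x \<partial>\<mu>)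
      \<le> (\<integral>\<^sup>+z. ennreal (norm (fst z - snd z) powr p) \<partial>\<gamma>) + ennreal \<eta>"
    using exists_partition_transport_cost_le_coupling[where xs = xs, OF assms(1-3) c \<gamma> \<open>0 < \<eta>\<close>]
    by blast
  have "(INF A\<in>partitions k \<Omega> f. \<Sum>i<k. \<integral>\<^sup>+x\<in>A i.
      ennreal ((norm (x - xs i) powr p + h i (measure \<mu> (A i))) * f x) \<partial>lborel)
    \<le> (\<Sum>i<k. \<integral>\<^sup>+x\<in>A i. ennreal ((norm (x - xs i) powr p + h i (measure \<mu> (A i))) * f x) \<partial>lborel)"
    using A(1) by (rule INF_lower)
  also have "\<dots> = (\<Sum>i<k. \<integral>\<^sup>+x. ennreal (norm (x - xs i) powr p) * indicator (A i) x \<partial>\<mu>) +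
      (\<Sum>i<k. ennreal (h i (c i) * c i))"
    using partition_objective_eq[where h = h, OF A(1) h_nonneg] A(2) by simp
  also have "\<dots> \<le> (\<integral>\<^sup>+z. ennreal (norm (fst z - snd z) powr p) \<partial>\<gamma>) + (\<Sum>i<k. ennreal (h i (c i) * c i)) + ennreal \<eta>"
    using cost by (simp add: add_right_mono ac_simps)
  finally show "(INF A\<in>partitions k \<Omega> f. \<Sum>i<k. \<integral>\<^sup>+x\<in>A i.
      ennreal ((norm (x - xs i) powr p + h i (measure \<mu> (A i))) * f x) \<partial>lborel)
    \<le> (\<integral>\<^sup>+z. ennreal (norm (fst z - snd z) powr p) \<partial>\<gamma>) + (\<Sum>i<k. ennreal (h i (c i) * c i)) + ennreal \<eta>" .
qed

lemma INF_transport_le_partition_objective: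
  fixes xs :: "nat \<Rightarrow> 'a" and h :: "nat \<Rightarrow> real \<Rightarrow> real"
  assumes A: "A \<in> partitions k \<Omega> f"
    and h_nonneg: "\<And>i t. i < k \<Longrightarrow> 0 \<le> t \<Longrightarrow> t \<le> 1 \<Longrightarrow> 0 \<le> h i t"
  shows "(INF c\<in>simplex_S k. Wpp p \<mu> (dirac_comb k c xs) + (\<Sum>i<k. ennreal (h i (c i) * c i)))
    \<le> (\<Sum>i<k. \<integral>\<^sup>+x\<in>A i. ennreal ((norm (x - xs i) powr p + h i (measure \<mu> (A i))) * f x) \<partial>lborel)"
proof -
  define c where "c = (\<lambda>i. if i < k then measure \<mu> (A i) else 0)"
  have "(INF c\<in>simplex_S k. Wpp p \<mu> (dirac_comb k c xs) + (\<Sum>i<k. ennreal (h i (c i) * c i)))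
      \<le> Wpp p \<mu> (dirac_comb k c xs) + (\<Sum>i<k. ennreal (h i (c i) * c i))"
    using Wpp_le_partition_transport_cost(1)[OF A] unfolding c_def by (rule INF_lower)
  also have "\<dots> \<le> (\<Sum>i<k. \<integral>\<^sup>+x. ennreal (norm (x - xs i) powr p) * indicator (A i) x \<partial>\<mu>) +
      (\<Sum>i<k. ennreal (h i (measure \<mu> (A i)) * measure \<mu> (A i)))"
  proof (rule add_mono)
    show "Wpp p \<mu> (dirac_comb k c xs)
        \<le> (\<Sum>i<k. \<integral>\<^sup>+x. ennreal (norm (x - xs i) powr p) * indicator (A i) x \<partial>\<mu>)"
      unfolding c_def by (rule Wpp_le_partition_transport_cost(2)[OF A])
    show "(\<Sum>i<k. ennreal (h i (c i) * c i)) \<le> (\<Sum>i<k. ennreal (h i (measure \<mu> (A i)) * measure \<mu> (A i)))"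
      unfolding c_def by (intro sum_mono) simp
  qed
  also have "\<dots> = (\<Sum>i<k. \<integral>\<^sup>+x\<in>A i. ennreal ((norm (x - xs i) powr p + h i (measure \<mu> (A i))) * f x) \<partial>lborel)"
    using partition_objective_eq[where h = h, OF A h_nonneg, symmetric] by simp
  finally show ?thesis .
qed

end

theorem lemma3p2:
  fixes \<Omega> :: "'a::euclidean_space set" and f :: "'a \<Rightarrow> real" and p :: real
    and k :: nat and xs :: "nat \<Rightarrow> 'a" and h :: "nat \<Rightarrow> real \<Rightarrow> real"
  assumes "\<Omega> \<in> sets borel" and "bounded \<Omega>"
    and "\<And>x. x \<in> \<Omega> \<Longrightarrow> 0 \<le> f x"
    and "set_integrable lborel \<Omega> f" and "(\<integral>x\<in>\<Omega>. f x \<partial>lborel) = 1"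
    and "1 \<le> p"
    and "\<And>i. i < k \<Longrightarrow> xs i \<in> \<Omega>"
    and "\<And>i t. i < k \<Longrightarrow> 0 \<le> t \<Longrightarrow> t \<le> 1 \<Longrightarrow> 0 \<le> h i t"
  shows "(INF A\<in>partitions k \<Omega> f. \<Sum>i<k. \<integral>\<^sup>+ x\<in>A i.
             ennreal ((norm (x - xs i) powr p + h i (measure (fmeas \<Omega> f) (A i))) * f x) \<partial>lborel)
       = (INF c\<in>simplex_S k. Wpp p (fmeas \<Omega> f) (dirac_comb k c xs)
             + (\<Sum>i<k. ennreal (h i (c i) * c i)))"
proof -
  interpret prob_density \<Omega> f
    using assms(1,3-5) by unfold_locales
  have "0 < p" using assms(6) by simp
  show ?thesis
    by (intro antisym INF_greatest INF_partition_objective_le[OF assms(2) \<open>0 < p\<close> assms(7,8)]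
        INF_transport_le_partition_objective[OF _ assms(8)])
qed

end
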